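(* Suppose that the family of vectors $\{\varphi_i\}_{i=1}^M$ does norm retrieval in $\mathbb{R}^N$. Then for every $j\in\{1,\dots,M\}$, if $\varphi_j\notin\mathrm{span}\{\varphi_i: i\neq j\}$, then $\varphi_j$ is orthogonal to $\varphi_i$ for all $i\neq j$. Consequently, a basis of $\mathbb{R}^N$ does norm retrieval in $\mathbb{R}^N$ if and only if it is an orthogonal basis.
   Context: A family of vectors $\{\varphi_i\}_{i=1}^M$ in $\mathbb{R}^N$ does norm retrieval if for all $x,y\in\mathbb{R}^N$, $|\langle x,\varphi_i\rangle|=|\langle y,\varphi_i\rangle|$ for all $i$ implies $\|x\|=\|y\|$. *)

theory Defs
  imports "HOL-Analysis.Analysis"
begin

definition norm_retrieval :: "(nat \<Rightarrow> real ^ 'n) \<Rightarrow> nat \<Rightarrow> bool" where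
  "norm_retrieval phi M \<longleftrightarrow>
     (\<forall>x y. (\<forall>i\<in>{1..M}. \<bar>x \<bullet> phi i\<bar> = \<bar>y \<bullet> phi i\<bar>) \<longrightarrow> norm x = norm y)"

definition is_basis_family :: "(nat \<Rightarrow> real ^ 'n) \<Rightarrow> nat \<Rightarrow> bool" where
  "is_basis_family phi M \<longleftrightarrow>
     inj_on phi {1..M} \<and> independent (phi ` {1..M}) \<and> span (phi ` {1..M}) = UNIV"

definition orthogonal_family :: "(nat \<Rightarrow> real ^ 'n) \<Rightarrow> nat \<Rightarrow> bool" where
  "orthogonal_family phi M \<longleftrightarrow>
     (\<forall>i\<in>{1..M}. \<forall>j\<in>{1..M}. i \<noteq> j \<longrightarrow> orthogonal (phi i) (phi j))"

end

(* Write phi_j = y + z with y in the span W of the other vectors and z orthogonal to W, z \<noteq> 0.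
   The vectors y + t z all have the same inner products with the phi_i for i \<noteq> j, and for
   t = -(1 + 2 |y|^2/|z|^2) the inner product with phi_j is -(phi_j \<bullet> phi_j). Norm retrieval then
   forces |y|^2 + t^2 |z|^2 = |y|^2 + |z|^2, i.e. t^2 = 1, hence y = 0 and phi_j = z is orthogonal
   to W. Conversely, for a pairwise orthogonal spanning set B the norm is determined by the
   numbers |x \<bullet> b| through Parseval's identity |x|^2 = \<Sum>b\<in>B. (b \<bullet> x)^2 / (b \<bullet> b). *)
theory Submission
  imports Defs
begin

lemma norm_retrieval_imp_orthogonal_to_others:
  fixes phi :: "'i \<Rightarrow> 'a::euclidean_space"
  assumes retrieval: "\<forall>x y. (\<forall>k\<in>I. \<bar>x \<bullet> phi k\<bar> = \<bar>y \<bullet> phi k\<bar>) \<longrightarrow> norm x = norm y"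
    and j: "j \<in> I" and not_in_span: "phi j \<notin> span (phi ` (I - {j}))"
    and i: "i \<in> I - {j}"
  shows "orthogonal (phi j) (phi i)"
proof -
  let ?W = "phi ` (I - {j})"
  obtain y z where y: "y \<in> span ?W" and z: "\<And>w. w \<in> span ?W \<Longrightarrow> orthogonal z w"
    and decomp: "phi j = y + z"
    using orthogonal_subspace_decomp_exists[of ?W "phi j"] by blast
  have zy: "z \<bullet> y = 0" using z[OF y] by (simp add: orthogonal_def)
  have "z \<noteq> 0" using not_in_span y decomp by auto
  then have zz: "z \<bullet> z > 0" by simp
  have norm_sq: "(y + t *\<^sub>R z) \<bullet> (y + t *\<^sub>R z) = y \<bullet> y + t\<^sup>2 * (z \<bullet> z)" for t
    using zy by (simp add: algebra_simps inner_commute power2_eq_square)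
  have phi_j_sq: "phi j \<bullet> phi j = y \<bullet> y + z \<bullet> z"
    using norm_sq[of 1] by (simp add: decomp)
  define t where "t = - (1 + 2 * (y \<bullet> y) / (z \<bullet> z))"
  have t_le: "t \<le> -1" unfolding t_def using zz by simp
  have "\<bar>(y + t *\<^sub>R z) \<bullet> phi k\<bar> = \<bar>phi j \<bullet> phi k\<bar>" if k: "k \<in> I" for k
  proof (cases "k = j")
    case True
    have "(y + t *\<^sub>R z) \<bullet> phi j = y \<bullet> y + t * (z \<bullet> z)"
      using zy by (simp add: decomp algebra_simps inner_commute)
    also have "\<dots> = - (phi j \<bullet> phi j)"
      using zz by (simp add: t_def phi_j_sq field_simps)
    finally show ?thesis using True by simp
  next
    case False
    then have "z \<bullet> phi k = 0" using k z[OF span_base] by (auto simp: orthogonal_def)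
    then show ?thesis by (simp add: decomp algebra_simps)
  qed
  then have "norm (y + t *\<^sub>R z) = norm (phi j)" using retrieval by blast
  then have "y \<bullet> y + t\<^sup>2 * (z \<bullet> z) = y \<bullet> y + z \<bullet> z"
    using norm_sq[of t] phi_j_sq by (simp flip: power2_norm_eq_inner)
  then have "t\<^sup>2 = 1" using zz by simp
  then have "t = -1" using t_le by (auto simp: power2_eq_1_iff)
  then have "y \<bullet> y = 0" using zz by (simp add: t_def field_simps)
  then have "phi j = z" using decomp by simp
  moreover have "phi i \<in> span ?W" using i by (intro span_base) auto
  ultimately show ?thesis using z by simp
qed

lemma independent_image_not_in_span_others:
  assumes "inj_on phi I" "independent (phi ` I)" "j \<in> I"
  shows "phi j \<notin> span (phi ` (I - {j}))"
proof -
  have "phi ` (I - {j}) = phi ` I - {phi j}"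
    using assms(1,3) by (simp add: inj_on_image_set_diff)
  then show ?thesis using assms(2,3) unfolding dependent_def by auto
qed

lemma pairwise_orthogonal_spanning_inner_self:
  fixes B :: "'a::euclidean_space set"
  assumes orth: "pairwise orthogonal B" and spanning: "span B = UNIV"
  shows "x \<bullet> x = (\<Sum>b\<in>B. (b \<bullet> x)\<^sup>2 / (b \<bullet> b))"
proof -
  let ?p = "\<Sum>b\<in>B. (b \<bullet> x / (b \<bullet> b)) *\<^sub>R b"
  have "orthogonal (x - ?p) (x - ?p)"
    using Gram_Schmidt_step[OF orth, of "x - ?p" x] spanning by simp
  then have "x = ?p" by (simp add: orthogonal_def)
  then have "x \<bullet> x = x \<bullet> ?p" by simp
  also have "\<dots> = (\<Sum>b\<in>B. (b \<bullet> x)\<^sup>2 / (b \<bullet> b))"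
    by (simp add: inner_sum_right inner_commute power2_eq_square)
  finally show ?thesis .
qed

lemma pairwise_orthogonal_spanning_norm_retrieval:
  fixes B :: "'a::euclidean_space set"
  assumes "pairwise orthogonal B" "span B = UNIV"
    and "\<forall>b\<in>B. \<bar>x \<bullet> b\<bar> = \<bar>y \<bullet> b\<bar>"
  shows "norm x = norm y"
proof -
  have "(b \<bullet> x)\<^sup>2 = (b \<bullet> y)\<^sup>2" if "b \<in> B" for b
    using assms(3) that by (metis inner_commute power2_abs)
  then have "x \<bullet> x = y \<bullet> y"
    using assms(1,2) by (simp add: pairwise_orthogonal_spanning_inner_self)
  then show ?thesis by (simp add: norm_eq_sqrt_inner)
qed

theorem mainTheorem7:
  fixes phi :: "nat \<Rightarrow> real ^ 'n" and M :: nat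
  shows "(norm_retrieval phi M \<longrightarrow>
           (\<forall>j\<in>{1..M}. phi j \<notin> span (phi ` ({1..M} - {j})) \<longrightarrow>
             (\<forall>i\<in>{1..M} - {j}. orthogonal (phi j) (phi i))))
       \<and> (is_basis_family phi M \<longrightarrow> (norm_retrieval phi M \<longleftrightarrow> orthogonal_family phi M))"
proof (intro conjI impI)
  show "\<forall>j\<in>{1..M}. phi j \<notin> span (phi ` ({1..M} - {j})) \<longrightarrow>
          (\<forall>i\<in>{1..M} - {j}. orthogonal (phi j) (phi i))" if "norm_retrieval phi M"
    using that norm_retrieval_imp_orthogonal_to_others[of "{1..M}" phi]
    unfolding norm_retrieval_def by blast
  assume "is_basis_family phi M"
  then have inj: "inj_on phi {1..M}" and indep: "independent (phi ` {1..M})"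
    and spanning: "span (phi ` {1..M}) = UNIV"
    unfolding is_basis_family_def by auto
  show "norm_retrieval phi M \<longleftrightarrow> orthogonal_family phi M"
  proof
    assume "norm_retrieval phi M"
    then show "orthogonal_family phi M"
      using norm_retrieval_imp_orthogonal_to_others[of "{1..M}" phi]
        independent_image_not_in_span_others[OF inj indep]
      unfolding norm_retrieval_def orthogonal_family_def by blast
  next
    assume "orthogonal_family phi M"
    then have "pairwise orthogonal (phi ` {1..M})"
      by (auto simp: pairwise_image pairwise_def orthogonal_family_def)
    then show "norm_retrieval phi M"
      using pairwise_orthogonal_spanning_norm_retrieval[OF _ spanning]
      unfolding norm_retrieval_def by blast
  qed
qed

end
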